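(* Let $f(x)=p(x)/q(x)$ where $p,q$ are real polynomials, $q$ not identically zero, $p$ not identically zero, and $p,q$ have no common real zero. Let $\Omega=\mathbb{R}\setminus\{x\in\mathbb{R}:q(x)=0\}$. Then $f:\Omega\to\mathbb{R}$ is amenable.
   Context: Relative distance on $\mathbb{R}$: $\mathrm{dist}(x,y)=0$ if $x=y=0$, $\mathrm{dist}(x,y)=|\log(y/x)|$ if $xy>0$, and $\mathrm{dist}(x,y)=\infty$ otherwise. For a real analytic function $f$ on an open set $\Omega\subseteq\mathbb{R}$, not identically zero, the condition number is $\kappa(f,x)=0$ if $x=0$, $\kappa(f,x)=\infty$ if $x\neq0$ and $f(x)=0$, and $\kappa(f,x)=|x|\,|f'(x)|/|f(x)|$ otherwise; $\mu(f,x)=1+\kappa(f,x)$. $f:\Omega\to\mathbb{R}$ is amenable if there is $C>0$ such that for every $x\in\Omega$ with $\kappa(f,x)<\infty$, the set $B_x=\{y\in\mathbb{R}:\mathrm{dist}(y,x)<1/(C\mu(f,x))\}$ is contained in $\Omega$ and $\mu(f,y)\leq C\mu(f,x)$ for all $y\in B_x$. *)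

theory Defs
  imports "HOL-Analysis.Analysis" "HOL-Computational_Algebra.Polynomial"
begin

definition rel_dist :: "real \<Rightarrow> real \<Rightarrow> ereal" where
  "rel_dist x y =
     (if x = 0 \<and> y = 0 then 0
      else if x * y > 0 then ereal \<bar>ln (y / x)\<bar>
      else \<infinity>)"

definition cond_num :: "(real \<Rightarrow> real) \<Rightarrow> real \<Rightarrow> ereal" where
  "cond_num f x =
     (if x = 0 then 0
      else if f x = 0 then \<infinity>
      else ereal (\<bar>x\<bar> * \<bar>deriv f x\<bar> / \<bar>f x\<bar>))"

definition mu_num :: "(real \<Rightarrow> real) \<Rightarrow> real \<Rightarrow> ereal" where
  "mu_num f x = 1 + cond_num f x"

definition amenable :: "(real \<Rightarrow> real) \<Rightarrow> real set \<Rightarrow> bool" where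
  "amenable f \<Omega> \<longleftrightarrow>
     (\<exists>C::real. C > 0 \<and>
        (\<forall>x\<in>\<Omega>. cond_num f x < \<infinity> \<longrightarrow>
           {y. rel_dist y x < 1 / (ereal C * mu_num f x)} \<subseteq> \<Omega> \<and>
           (\<forall>y\<in>{y. rel_dist y x < 1 / (ereal C * mu_num f x)}.
              mu_num f y \<le> ereal C * mu_num f x)))"

end

theory Submission
  imports Defs "HOL-Computational_Algebra.Fundamental_Theorem_Algebra"
begin

text \<open>
  Over \<open>\<complex>\<close>, \<open>x f'(x) / f(x) = \<Sum> m\<^sub>z x / (x - z)\<close>, summed over the zeros (\<open>m\<^sub>z > 0\<close>) and
  poles (\<open>m\<^sub>z < 0\<close>) of \<open>f = p / q\<close>, so \<open>\<kappa>(f, x)\<close> is the modulus of this sum. Let \<open>\<delta>(x)\<close> be the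
  relative distance \<open>|x - z| / |x|\<close> from \<open>x\<close> to the nearest such \<open>z\<close>, capped at 1. Each term is
  at most \<open>|m\<^sub>z| / \<delta>(x)\<close>, so \<open>\<mu>(f, x) \<delta>(x)\<close> is bounded above. Distinct zeros and poles are
  separated at a fixed relative scale, so when \<open>\<delta>(x)\<close> is small the nearest one dominates the sum
  and \<open>\<mu>(f, x) \<delta>(x)\<close> is also bounded below. So for large \<open>C\<close> the relative ball of radius
  \<open>1 / (C \<mu>(f, x))\<close> has radius at most \<open>\<delta>(x) / 4\<close>; on it \<open>\<delta>\<close> shrinks by at most a factor 4,
  hence \<open>\<mu>(f, y) \<le> C \<mu>(f, x)\<close> and the ball contains no pole. Since \<open>p\<close> and \<open>q\<close> have no common real zero, every real zero of
  \<open>q\<close> is a pole, so the ball stays inside \<open>\<Omega>\<close>.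
\<close>

lemma abs_diff_one_le_abs_ln:
  fixes s :: real
  assumes "0 < s" and "\<bar>ln s\<bar> \<le> 1/2"
  shows "\<bar>s - 1\<bar> \<le> 2 * \<bar>ln s\<bar>"
proof -
  have s: "s = exp (ln s)" using assms(1) by simp
  have "exp (ln s) \<le> 1 + 2 * \<bar>ln s\<bar>"
    using exp_bound_lemma[of "ln s"] assms(2) by auto
  moreover have "1 + ln s \<le> exp (ln s)" by (rule exp_ge_add_one_self)
  ultimately show ?thesis using s by linarith
qed

section \<open>Logarithmic derivatives of polynomials\<close>

lemma poly_map_poly_of_real:
  "poly (map_poly of_real p) (of_real x) = (of_real (poly p x) :: complex)"
  by (induction p) (auto simp: map_poly_pCons)

lemma pderiv_map_poly_of_real:
  "pderiv (map_poly of_real p) = (map_poly of_real (pderiv p) :: complex poly)"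
  by (rule poly_eqI) (simp add: coeff_pderiv coeff_map_poly)

lemma map_poly_of_real_eq_0_iff [simp]: "(map_poly of_real p :: complex poly) = 0 \<longleftrightarrow> p = 0"
  by (simp add: map_poly_eq_0_iff)

lemma poly_pderiv_prod_div:
  fixes f :: "'i \<Rightarrow> 'a::field poly"
  assumes "finite I" and "\<forall>i\<in>I. poly (f i) w \<noteq> 0"
  shows "poly (pderiv (\<Prod>i\<in>I. f i)) w / poly (\<Prod>i\<in>I. f i) w
           = (\<Sum>i\<in>I. poly (pderiv (f i)) w / poly (f i) w)"
  using assms
proof (induction I rule: finite_induct)
  case (insert j I)
  have "poly (\<Prod>i\<in>I. f i) w \<noteq> 0" "poly (f j) w \<noteq> 0"
    using insert.prems by (auto simp: poly_prod insert.hyps(1))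
  with insert show ?case
    by (simp add: pderiv_mult field_simps)
qed simp_all

lemma poly_pderiv_linear_power_div:
  fixes z w :: "'a::field"
  assumes "w \<noteq> z"
  shows "poly (pderiv ([:-z, 1:] ^ n)) w / poly ([:-z, 1:] ^ n) w = of_nat n / (w - z)"
proof (cases n)
  case (Suc k)
  have "pderiv ([:-z, 1:] ^ Suc k) = smult (of_nat (Suc k)) ([:-z, 1:] ^ k)"
    by (simp add: pderiv_power_Suc pderiv_pCons del: power_Suc)
  with assms Suc show ?thesis
    by (simp add: field_simps)
qed simp

lemma poly_pderiv_div_complex:
  fixes P :: "complex poly"
  assumes "P \<noteq> 0" and "poly P w \<noteq> 0"
  shows "poly (pderiv P) w / poly P w = (\<Sum>z | poly P z = 0. of_nat (order z P) / (w - z))"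
proof -
  let ?R = "{z. poly P z = 0}"
  let ?F = "\<lambda>z. [:-z, 1:] ^ order z P"
  have "poly (pderiv P) w / poly P w = poly (pderiv (\<Prod>z\<in>?R. ?F z)) w / poly (\<Prod>z\<in>?R. ?F z) w"
    using assms by (subst (1 2) complex_poly_decompose[symmetric]) (simp add: pderiv_smult)
  also have "\<dots> = (\<Sum>z\<in>?R. poly (pderiv (?F z)) w / poly (?F z) w)"
    using assms by (intro poly_pderiv_prod_div poly_roots_finite) auto
  also have "\<dots> = (\<Sum>z\<in>?R. of_nat (order z P) / (w - z))"
    using assms(2) by (intro sum.cong refl poly_pderiv_linear_power_div) auto
  finally show ?thesis .
qed

section \<open>Elasticity of a product of linear factors\<close>

text \<open>For \<open>g(w) = \<Prod>\<^sub>z (w - z) ^ m z\<close> with finitely many \<open>m z \<noteq> 0\<close>,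
  \<open>elasticity m x = x g'(x) / g(x)\<close>.\<close>

definition elasticity :: "(complex \<Rightarrow> int) \<Rightarrow> real \<Rightarrow> complex" where
  "elasticity m x = (\<Sum>z | m z \<noteq> 0. of_int (m z) * (of_real x / (of_real x - z)))"

definition rel_cdist :: "real \<Rightarrow> complex \<Rightarrow> real" where
  "rel_cdist x z = cmod (of_real x - z) / \<bar>x\<bar>"

definition rel_root_dist :: "(complex \<Rightarrow> int) \<Rightarrow> real \<Rightarrow> real" where
  "rel_root_dist m x = Min (insert 1 (rel_cdist x ` {z. m z \<noteq> 0}))"

definition total_multiplicity :: "(complex \<Rightarrow> int) \<Rightarrow> real" where
  "total_multiplicity m = (\<Sum>z | m z \<noteq> 0. \<bar>of_int (m z)\<bar>)"

lemma total_multiplicity_nonneg: "0 \<le> total_multiplicity m"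
  unfolding total_multiplicity_def by (intro sum_nonneg) simp

lemma norm_elasticity_term:
  "cmod (of_int k * (of_real x / (of_real x - z))) = \<bar>of_int k\<bar> / rel_cdist x z"
  by (simp add: rel_cdist_def norm_mult norm_divide)

lemma norm_elasticity_term_le:
  assumes "0 < d" and "d \<le> rel_cdist x z"
  shows "cmod (of_int k * (of_real x / (of_real x - z))) \<le> \<bar>of_int k\<bar> / d"
  unfolding norm_elasticity_term using assms by (intro divide_left_mono) auto

lemma finite_imp_rel_separated:
  fixes A :: "complex set"
  assumes "finite A"
  obtains \<epsilon> where "0 < \<epsilon>" and "\<epsilon> \<le> 1"
    and "\<And>x z w. x \<noteq> 0 \<Longrightarrow> z \<in> A \<Longrightarrow> w \<in> A
           \<Longrightarrow> rel_cdist x z < \<epsilon> \<Longrightarrow> rel_cdist x w < \<epsilon> \<Longrightarrow> z = w"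
proof
  \<comment> \<open>Points within relative distance \<open>\<epsilon> \<le> 1/2\<close> of \<open>x\<close> satisfy \<open>|x| < 2|z|\<close>, so they are \<open>4\<epsilon>|z|\<close>-close to each other.\<close>
  define D where "D = (\<lambda>(z, w). cmod (z - w) / (4 * cmod z)) ` {(z, w) \<in> A \<times> A. z \<noteq> w \<and> z \<noteq> 0}"
  define \<epsilon> where "\<epsilon> = Min (insert (1/2) D)"
  have "finite D" unfolding D_def using assms by (auto intro: finite_subset[of _ "A \<times> A"])
  then show "0 < \<epsilon>" unfolding \<epsilon>_def D_def by (subst Min_gr_iff) auto
  have "\<epsilon> \<le> 1/2" unfolding \<epsilon>_def using \<open>finite D\<close> by (subst Min_le_iff) auto
  then show "\<epsilon> \<le> 1" by simp
  fix x :: real and z w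
  assume "x \<noteq> 0" "z \<in> A" "w \<in> A" and "rel_cdist x z < \<epsilon>" "rel_cdist x w < \<epsilon>"
  then have close: "cmod (of_real x - z) < \<epsilon> * \<bar>x\<bar>" "cmod (of_real x - w) < \<epsilon> * \<bar>x\<bar>"
    by (simp_all add: rel_cdist_def divide_less_eq)
  have "\<bar>x\<bar> \<le> cmod z + cmod (of_real x - z)"
    using norm_triangle_ineq[of z "of_real x - z"] by simp
  then have "\<bar>x\<bar> < 2 * cmod z"
    using close(1) mult_right_mono[OF \<open>\<epsilon> \<le> 1/2\<close> abs_ge_zero[of x]] by linarith
  have "cmod (z - w) \<le> cmod (of_real x - z) + cmod (of_real x - w)"
    using norm_triangle_ineq4[of "of_real x - w" "of_real x - z"] by (simp add: norm_minus_commute)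
  also have "\<dots> < 2 * (\<epsilon> * \<bar>x\<bar>)"
    using close by simp
  also have "\<dots> \<le> 4 * \<epsilon> * cmod z"
    using \<open>\<bar>x\<bar> < 2 * cmod z\<close> \<open>0 < \<epsilon>\<close> by simp
  finally have "cmod (z - w) < 4 * \<epsilon> * cmod z" .
  show "z = w"
  proof (rule ccontr)
    assume "z \<noteq> w"
    have "z \<noteq> 0" using \<open>\<bar>x\<bar> < 2 * cmod z\<close> by auto
    with \<open>z \<noteq> w\<close> \<open>z \<in> A\<close> \<open>w \<in> A\<close> have "\<epsilon> \<le> cmod (z - w) / (4 * cmod z)"
      unfolding \<epsilon>_def D_def using \<open>finite D\<close>[unfolded D_def] by (intro Min_le) auto
    with \<open>z \<noteq> 0\<close> \<open>cmod (z - w) < 4 * \<epsilon> * cmod z\<close> show False by (simp add: field_simps)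
  qed
qed

context
  fixes m :: "complex \<Rightarrow> int"
  assumes finite_support: "finite {z. m z \<noteq> 0}"
begin

lemma rel_root_dist_le_1: "rel_root_dist m x \<le> 1"
  unfolding rel_root_dist_def using finite_support by (intro Min_le) auto

lemma rel_root_dist_le:
  assumes "m z \<noteq> 0"
  shows "rel_root_dist m x \<le> rel_cdist x z"
  unfolding rel_root_dist_def using finite_support assms by (intro Min_le) auto

lemma rel_root_dist_nonneg: "0 \<le> rel_root_dist m x"
  unfolding rel_root_dist_def rel_cdist_def using finite_support by (subst Min_ge_iff) auto

lemma rel_root_dist_pos_iff:
  assumes "x \<noteq> 0"
  shows "0 < rel_root_dist m x \<longleftrightarrow> m (of_real x) = 0"
proof
  assume "0 < rel_root_dist m x"
  then show "m (of_real x) = 0"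
    using rel_root_dist_le[of "of_real x" x] by (force simp: rel_cdist_def)
next
  assume "m (of_real x) = 0"
  then show "0 < rel_root_dist m x"
    unfolding rel_root_dist_def rel_cdist_def using finite_support assms
    by (subst Min_gr_iff) (auto intro!: divide_pos_pos)
qed

lemma rel_root_dist_attained:
  assumes "rel_root_dist m x < 1"
  obtains r where "m r \<noteq> 0" and "rel_root_dist m x = rel_cdist x r"
proof -
  have "rel_root_dist m x \<in> insert 1 (rel_cdist x ` {z. m z \<noteq> 0})"
    unfolding rel_root_dist_def using finite_support by (intro Min_in) auto
  with assms that show ?thesis by auto
qed

lemma rel_root_dist_perturb:
  assumes "x \<noteq> 0" and "\<bar>y / x - 1\<bar> \<le> rel_root_dist m x / 2"
  shows "rel_root_dist m x / 4 \<le> rel_root_dist m y"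
proof -
  define \<delta> where "\<delta> = rel_root_dist m x"
  have "0 \<le> \<delta>" "\<delta> \<le> 1" unfolding \<delta>_def by (rule rel_root_dist_nonneg rel_root_dist_le_1)+
  have xy: "\<bar>x - y\<bar> \<le> \<delta> * \<bar>x\<bar> / 2"
    using assms mult_right_mono[OF assms(2), of "\<bar>x\<bar>"]
    by (simp add: \<delta>_def abs_mult[symmetric] left_diff_distrib abs_minus_commute)
  moreover have "\<delta> * \<bar>x\<bar> \<le> \<bar>x\<bar>" using mult_right_mono[OF \<open>\<delta> \<le> 1\<close> abs_ge_zero[of x]] by simp
  ultimately have "\<bar>y\<bar> \<le> 2 * \<bar>x\<bar>" and "y \<noteq> 0" using assms(1) by linarith+
  have "\<delta> / 4 \<le> rel_cdist y z" if "m z \<noteq> 0" for z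
  proof -
    have "\<delta> * \<bar>x\<bar> \<le> cmod (of_real x - z)"
      using rel_root_dist_le[OF that, of x] assms(1) by (simp add: \<delta>_def rel_cdist_def field_simps)
    moreover have "cmod (of_real x - z) \<le> cmod (of_real y - z) + \<bar>x - y\<bar>"
      using norm_triangle_ineq[of "of_real y - z" "of_real (x - y) :: complex"]
      by (simp only: norm_of_real) simp
    moreover have "\<delta> * \<bar>y\<bar> \<le> \<delta> * (2 * \<bar>x\<bar>)"
      using \<open>\<bar>y\<bar> \<le> 2 * \<bar>x\<bar>\<close> \<open>0 \<le> \<delta>\<close> by (rule mult_left_mono)
    ultimately have "\<delta> * \<bar>y\<bar> / 4 \<le> cmod (of_real y - z)"
      using xy by linarith
    then show ?thesis using \<open>y \<noteq> 0\<close> by (simp add: rel_cdist_def field_simps)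
  qed
  then show ?thesis
    unfolding \<delta>_def[symmetric] rel_root_dist_def[of m y] using finite_support \<open>\<delta> \<le> 1\<close>
    by (subst Min_ge_iff) auto
qed

lemma rel_root_dist_ln_perturb:
  assumes "x \<noteq> 0" and "0 < x * y" and "\<bar>ln (x / y)\<bar> \<le> rel_root_dist m x / 4"
  shows "rel_root_dist m x / 4 \<le> rel_root_dist m y"
proof (rule rel_root_dist_perturb[OF assms(1)])
  have "0 < y / x" using assms(2) by (auto simp: zero_less_divide_iff zero_less_mult_iff)
  moreover have "\<bar>ln (y / x)\<bar> = \<bar>ln (x / y)\<bar>" using ln_inverse[of "y / x"] by simp
  ultimately show "\<bar>y / x - 1\<bar> \<le> rel_root_dist m x / 2"
    using abs_diff_one_le_abs_ln[of "y / x"] assms(3) rel_root_dist_le_1[of x] by fastforce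
qed

lemma norm_elasticity_le:
  assumes "x \<noteq> 0" and "m (of_real x) = 0"
  shows "cmod (elasticity m x) \<le> total_multiplicity m / rel_root_dist m x"
proof -
  have \<delta>: "0 < rel_root_dist m x" using rel_root_dist_pos_iff assms by simp
  have "cmod (elasticity m x) \<le> (\<Sum>z | m z \<noteq> 0. cmod (of_int (m z) * (of_real x / (of_real x - z))))"
    unfolding elasticity_def by (rule norm_sum)
  also have "\<dots> \<le> (\<Sum>z | m z \<noteq> 0. \<bar>of_int (m z)\<bar> / rel_root_dist m x)"
    using rel_root_dist_le by (intro sum_mono norm_elasticity_term_le[OF \<delta>]) simp
  also have "\<dots> = total_multiplicity m / rel_root_dist m x"
    unfolding total_multiplicity_def by (rule sum_divide_distrib[symmetric])
  finally show ?thesis .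
qed

lemma norm_elasticity_ge:
  assumes "x \<noteq> 0" and "m (of_real x) = 0" and "0 < \<epsilon>" and "\<epsilon> \<le> 1"
    and separated: "\<And>z w. m z \<noteq> 0 \<Longrightarrow> m w \<noteq> 0
           \<Longrightarrow> rel_cdist x z < \<epsilon> \<Longrightarrow> rel_cdist x w < \<epsilon> \<Longrightarrow> z = w"
    and close: "rel_root_dist m x < \<epsilon>"
  shows "1 / rel_root_dist m x - total_multiplicity m / \<epsilon> \<le> cmod (elasticity m x)"
proof -
  define \<delta> where "\<delta> = rel_root_dist m x"
  define h where "h z = of_int (m z) * (of_real x / (of_real x - z))" for z
  have "0 < \<delta>" unfolding \<delta>_def using rel_root_dist_pos_iff assms(1,2) by simp
  obtain r where "m r \<noteq> 0" and r: "\<delta> = rel_cdist x r"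
    using rel_root_dist_attained close \<open>\<epsilon> \<le> 1\<close> unfolding \<delta>_def by (metis less_le_trans)
  have "1 / \<delta> \<le> cmod (h r)"
  proof -
    have "1 \<le> \<bar>of_int (m r) :: real\<bar>" using \<open>m r \<noteq> 0\<close> by linarith
    then show ?thesis
      unfolding h_def norm_elasticity_term r[symmetric] using \<open>0 < \<delta>\<close> by (intro divide_right_mono) auto
  qed
  have "cmod (\<Sum>z\<in>{z. m z \<noteq> 0} - {r}. h z) \<le> (\<Sum>z\<in>{z. m z \<noteq> 0} - {r}. \<bar>of_int (m z)\<bar> / \<epsilon>)"
  proof (rule order_trans[OF norm_sum sum_mono])
    fix z assume "z \<in> {z. m z \<noteq> 0} - {r}"
    then have "\<epsilon> \<le> rel_cdist x z"
      using separated[of z r] \<open>m r \<noteq> 0\<close> close r unfolding \<delta>_def by force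
    then show "cmod (h z) \<le> \<bar>of_int (m z)\<bar> / \<epsilon>"
      unfolding h_def by (rule norm_elasticity_term_le[OF \<open>0 < \<epsilon>\<close>])
  qed
  also have "\<dots> \<le> total_multiplicity m / \<epsilon>"
    unfolding total_multiplicity_def sum_divide_distrib[symmetric] using finite_support \<open>0 < \<epsilon>\<close>
    by (intro divide_right_mono sum_mono2) auto
  finally have rest: "cmod (\<Sum>z\<in>{z. m z \<noteq> 0} - {r}. h z) \<le> total_multiplicity m / \<epsilon>" .
  have "elasticity m x = h r + (\<Sum>z\<in>{z. m z \<noteq> 0} - {r}. h z)"
    unfolding elasticity_def h_def using finite_support \<open>m r \<noteq> 0\<close> by (subst sum.remove) auto
  then have "cmod (h r) - cmod (\<Sum>z\<in>{z. m z \<noteq> 0} - {r}. h z) \<le> cmod (elasticity m x)"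
    by (metis norm_diff_ineq)
  with \<open>1 / \<delta> \<le> cmod (h r)\<close> rest show ?thesis unfolding \<delta>_def by linarith
qed

lemma elasticity_rel_root_dist_upper_bound:
  assumes "x \<noteq> 0" and "m (of_real x) = 0"
  shows "(1 + cmod (elasticity m x)) * rel_root_dist m x \<le> 1 + total_multiplicity m"
proof -
  have "0 < rel_root_dist m x" using rel_root_dist_pos_iff assms by simp
  then have "cmod (elasticity m x) * rel_root_dist m x \<le> total_multiplicity m"
    using norm_elasticity_le[OF assms] by (simp add: field_simps)
  then show ?thesis using rel_root_dist_le_1[of x] by (simp add: distrib_right)
qed

lemma elasticity_rel_root_dist_lower_bound:
  obtains c where "0 < c"
    and "\<And>x. x \<noteq> 0 \<Longrightarrow> m (of_real x) = 0 \<Longrightarrow> c \<le> (1 + cmod (elasticity m x)) * rel_root_dist m x"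
proof -
  obtain \<epsilon> where "0 < \<epsilon>" "\<epsilon> \<le> 1" and separated_support:
    "\<And>x z w. x \<noteq> 0 \<Longrightarrow> z \<in> {z. m z \<noteq> 0} \<Longrightarrow> w \<in> {z. m z \<noteq> 0}
       \<Longrightarrow> rel_cdist x z < \<epsilon> \<Longrightarrow> rel_cdist x w < \<epsilon> \<Longrightarrow> z = w"
    by (rule finite_imp_rel_separated[OF finite_support]) blast
  define W where "W = total_multiplicity m"
  define \<eta> where "\<eta> = \<epsilon> / (2 * W + 1)"
  have "0 \<le> W" unfolding W_def by (rule total_multiplicity_nonneg)
  then have "0 < \<eta>" "\<eta> \<le> \<epsilon>" using \<open>0 < \<epsilon>\<close> by (auto simp: \<eta>_def field_simps)
  show ?thesis
  proof (rule that[of "min (1/2) \<eta>"])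
    show "0 < min (1/2) \<eta>" using \<open>0 < \<eta>\<close> by simp
    fix x assume x: "x \<noteq> 0" "m (of_real x) = 0"
    define \<delta> where "\<delta> = rel_root_dist m x"
    define \<mu> where "\<mu> = 1 + cmod (elasticity m x)"
    have "0 < \<delta>" unfolding \<delta>_def using rel_root_dist_pos_iff x by simp
    show "min (1/2) \<eta> \<le> \<mu> * \<delta>"
    proof (cases "\<delta> < \<eta>")
      case True
      then have "1 / \<delta> - W / \<epsilon> \<le> cmod (elasticity m x)"
        unfolding \<delta>_def W_def using \<open>\<eta> \<le> \<epsilon>\<close> separated_support[OF x(1)]
        by (intro norm_elasticity_ge[OF x \<open>0 < \<epsilon>\<close> \<open>\<epsilon> \<le> 1\<close>]) auto
      then have "(1 / \<delta> - W / \<epsilon>) * \<delta> \<le> \<mu> * \<delta>"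
        unfolding \<mu>_def using \<open>0 < \<delta>\<close> by (intro mult_right_mono) auto
      moreover have "(1 / \<delta> - W / \<epsilon>) * \<delta> = 1 - W * \<delta> / \<epsilon>"
        using \<open>0 < \<delta>\<close> by (simp add: field_simps)
      moreover have "\<delta> * (2 * W + 1) < \<epsilon>"
        using True \<open>0 \<le> W\<close> by (simp add: \<eta>_def pos_less_divide_eq)
      then have "2 * (W * \<delta>) \<le> \<epsilon>" using \<open>0 < \<delta>\<close> by (simp add: algebra_simps)
      then have "W * \<delta> / \<epsilon> \<le> 1/2" using \<open>0 < \<epsilon>\<close> by (simp add: divide_le_eq)
      ultimately have "1/2 \<le> \<mu> * \<delta>" by linarith
      then show ?thesis by simp
    next
      case False
      have "1 * \<delta> \<le> \<mu> * \<delta>"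
        using \<open>0 < \<delta>\<close> by (intro mult_right_mono) (simp_all add: \<mu>_def)
      with False show ?thesis by simp
    qed
  qed
qed

lemma elasticity_rel_stable:
  obtains C where "1 \<le> C"
    and "\<And>x y. x \<noteq> 0 \<Longrightarrow> m (of_real x) = 0 \<Longrightarrow> 0 < x * y
           \<Longrightarrow> \<bar>ln (x / y)\<bar> < 1 / (C * (1 + cmod (elasticity m x)))
           \<Longrightarrow> m (of_real y) = 0 \<and> 1 + cmod (elasticity m y) \<le> C * (1 + cmod (elasticity m x))"
proof -
  obtain c where "0 < c" and lower:
    "\<And>x. x \<noteq> 0 \<Longrightarrow> m (of_real x) = 0 \<Longrightarrow> c \<le> (1 + cmod (elasticity m x)) * rel_root_dist m x"
    by (rule elasticity_rel_root_dist_lower_bound) blast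
  define W where "W = total_multiplicity m"
  define C where "C = max 1 (4 * (1 + W) / c)"
  have "0 \<le> W" unfolding W_def by (rule total_multiplicity_nonneg)
  have "4 * (1 + W) = (4 * (1 + W) / c) * c" using \<open>0 < c\<close> by simp
  also have "\<dots> \<le> C * c" using \<open>0 < c\<close> by (intro mult_right_mono) (auto simp: C_def)
  finally have "4 * (1 + W) \<le> C * c" .
  show ?thesis
  proof (rule that[of C])
    show "1 \<le> C" by (simp add: C_def)
    fix x y :: real
    assume x: "x \<noteq> 0" "m (of_real x) = 0" and "0 < x * y"
      and close: "\<bar>ln (x / y)\<bar> < 1 / (C * (1 + cmod (elasticity m x)))"
    define \<mu> where "\<mu> = 1 + cmod (elasticity m x)"
    define \<delta> where "\<delta> = rel_root_dist m x"
    have "1 \<le> \<mu>" "0 < \<delta>" unfolding \<mu>_def \<delta>_def using rel_root_dist_pos_iff x by auto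
    have "C * c \<le> C * (\<mu> * \<delta>)"
      using lower[OF x] \<open>1 \<le> C\<close> unfolding \<mu>_def \<delta>_def by (intro mult_left_mono) auto
    with \<open>4 * (1 + W) \<le> C * c\<close> have key: "4 * (1 + W) \<le> C * \<mu> * \<delta>" by (simp add: mult.assoc)
    then have "1 / (C * \<mu>) \<le> \<delta> / 4"
      using \<open>0 \<le> W\<close> \<open>1 \<le> C\<close> \<open>1 \<le> \<mu>\<close> by (simp add: field_simps)
    then have "\<delta> / 4 \<le> rel_root_dist m y"
      using close unfolding \<delta>_def \<mu>_def by (intro rel_root_dist_ln_perturb[OF x(1) \<open>0 < x * y\<close>]) simp
    moreover have "y \<noteq> 0" using \<open>0 < x * y\<close> by auto
    ultimately have "m (of_real y) = 0" using rel_root_dist_pos_iff \<open>0 < \<delta>\<close> by force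
    have "(1 + cmod (elasticity m y)) * (\<delta> / 4) \<le> (1 + cmod (elasticity m y)) * rel_root_dist m y"
      using \<open>\<delta> / 4 \<le> rel_root_dist m y\<close> by (intro mult_left_mono) auto
    also have "\<dots> \<le> 1 + W"
      unfolding W_def using \<open>y \<noteq> 0\<close> \<open>m (of_real y) = 0\<close> by (rule elasticity_rel_root_dist_upper_bound)
    also have "\<dots> \<le> C * \<mu> * (\<delta> / 4)" using key by simp
    finally have "1 + cmod (elasticity m y) \<le> C * \<mu>" using \<open>0 < \<delta>\<close> by simp
    with \<open>m (of_real y) = 0\<close> show "m (of_real y) = 0 \<and> 1 + cmod (elasticity m y) \<le> C * (1 + cmod (elasticity m x))"
      unfolding \<mu>_def by simp
  qed
qed

end

section \<open>Rational functions\<close>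

definition rat_order :: "real poly \<Rightarrow> real poly \<Rightarrow> complex \<Rightarrow> int" where
  "rat_order p q z = int (order z (map_poly of_real p)) - int (order z (map_poly of_real q))"

lemma order_of_real_eq_0_iff:
  fixes p :: "real poly"
  assumes "p \<noteq> 0"
  shows "order (of_real x) (map_poly of_real p :: complex poly) = 0 \<longleftrightarrow> poly p x \<noteq> 0"
  using assms by (simp add: order_eq_0_iff poly_map_poly_of_real)

lemma rat_order_support_subset:
  "{z. rat_order p q z \<noteq> 0} \<subseteq>
     {z. poly (map_poly of_real p) z = 0} \<union> {z. poly (map_poly of_real q) z = 0}"
  by (auto simp: rat_order_def order_root)

lemma finite_rat_order_support:
  assumes "p \<noteq> 0" and "q \<noteq> 0"
  shows "finite {z. rat_order p q z \<noteq> 0}"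
  using assms by (intro finite_subset[OF rat_order_support_subset]) (simp add: poly_roots_finite)

lemma rat_order_of_real_eq_0_iff:
  assumes "p \<noteq> 0" and "q \<noteq> 0" and "\<And>x. poly q x = 0 \<Longrightarrow> poly p x \<noteq> 0"
  shows "rat_order p q (of_real x) = 0 \<longleftrightarrow> poly p x \<noteq> 0 \<and> poly q x \<noteq> 0"
  using assms order_of_real_eq_0_iff[OF assms(1), of x] order_of_real_eq_0_iff[OF assms(2), of x]
  by (auto simp: rat_order_def)

lemma of_real_elasticity_rational:
  assumes "p \<noteq> 0" and "q \<noteq> 0" and "poly p x \<noteq> 0" and "poly q x \<noteq> 0"
  shows "of_real (x * deriv (\<lambda>x. poly p x / poly q x) x / (poly p x / poly q x))
           = elasticity (rat_order p q) x"
proof -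
  define X where "X = (of_real x :: complex)"
  define S where "S = {z. poly (map_poly of_real p) z = 0} \<union> {z. poly (map_poly of_real q) z = (0::complex)}"
  have "finite S" using assms(1,2) by (simp add: S_def poly_roots_finite)
  have log_deriv: "of_real (poly (pderiv r) x / poly r x) = (\<Sum>z\<in>S. of_nat (order z (map_poly of_real r)) / (X - z))"
    if "r \<noteq> 0" "poly r x \<noteq> 0" "{z. poly (map_poly of_real r) z = 0} \<subseteq> S" for r
  proof -
    have "of_real (poly (pderiv r) x / poly r x) = poly (pderiv (map_poly of_real r)) X / poly (map_poly of_real r) X"
      by (simp add: X_def pderiv_map_poly_of_real poly_map_poly_of_real)
    also have "\<dots> = (\<Sum>z | poly (map_poly of_real r) z = 0. of_nat (order z (map_poly of_real r)) / (X - z))"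
      using that by (intro poly_pderiv_div_complex) (simp_all add: X_def poly_map_poly_of_real)
    also have "\<dots> = (\<Sum>z\<in>S. of_nat (order z (map_poly of_real r)) / (X - z))"
      using that \<open>finite S\<close> by (intro sum.mono_neutral_left) (auto dest: order_0I)
    finally show ?thesis .
  qed
  have "((\<lambda>x. poly p x / poly q x) has_real_derivative
      (poly (pderiv p) x * poly q x - poly p x * poly (pderiv q) x) / (poly q x * poly q x)) (at x)"
    using assms(4) by (intro DERIV_divide poly_DERIV)
  then have "x * deriv (\<lambda>x. poly p x / poly q x) x / (poly p x / poly q x)
      = x * (poly (pderiv p) x / poly p x) - x * (poly (pderiv q) x / poly q x)"
    using assms(3,4) by (simp add: DERIV_imp_deriv field_simps)
  also have "of_real \<dots> = X * of_real (poly (pderiv p) x / poly p x) - X * of_real (poly (pderiv q) x / poly q x)"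
    by (simp add: X_def)
  also have "\<dots> = X * (\<Sum>z\<in>S. of_nat (order z (map_poly of_real p)) / (X - z))
                  - X * (\<Sum>z\<in>S. of_nat (order z (map_poly of_real q)) / (X - z))"
    using log_deriv[of p] log_deriv[of q] assms by (auto simp: S_def simp del: of_real_divide)
  also have "\<dots> = (\<Sum>z\<in>S. of_int (rat_order p q z) * (X / (X - z)))"
    by (simp add: sum_distrib_left sum_subtractf[symmetric] rat_order_def algebra_simps)
  also have "\<dots> = elasticity (rat_order p q) x"
    unfolding elasticity_def X_def using \<open>finite S\<close>
    using rat_order_support_subset by (intro sum.mono_neutral_right) (auto simp: S_def)
  finally show ?thesis .
qed

lemma mu_num_rational:
  assumes "p \<noteq> 0" and "q \<noteq> 0" and "x \<noteq> 0" and "poly p x \<noteq> 0" and "poly q x \<noteq> 0"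
  shows "mu_num (\<lambda>x. poly p x / poly q x) x = ereal (1 + cmod (elasticity (rat_order p q) x))"
proof -
  have "cmod (elasticity (rat_order p q) x)
          = \<bar>x * deriv (\<lambda>x. poly p x / poly q x) x / (poly p x / poly q x)\<bar>"
    by (simp only: of_real_elasticity_rational[OF assms(1,2,4,5), symmetric] norm_of_real)
  then show ?thesis
    using assms(3-5) by (simp add: mu_num_def cond_num_def abs_mult)
qed

lemma amenableI:
  assumes "1 \<le> C"
    and stable: "\<And>x y. x \<in> \<Omega> \<Longrightarrow> x \<noteq> 0 \<Longrightarrow> cond_num f x < \<infinity> \<Longrightarrow> 0 < x * y
           \<Longrightarrow> ereal \<bar>ln (x / y)\<bar> < 1 / (ereal C * mu_num f x)
           \<Longrightarrow> y \<in> \<Omega> \<and> mu_num f y \<le> ereal C * mu_num f x"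
  shows "amenable f \<Omega>"
proof -
  have "{y. rel_dist y x < 1 / (ereal C * mu_num f x)} \<subseteq> \<Omega> \<and>
        (\<forall>y\<in>{y. rel_dist y x < 1 / (ereal C * mu_num f x)}. mu_num f y \<le> ereal C * mu_num f x)"
    if x: "x \<in> \<Omega>" "cond_num f x < \<infinity>" for x
  proof (cases "x = 0")
    case True
    then have "{y. rel_dist y x < 1 / (ereal C * mu_num f x)} = {0}"
      using assms(1) by (auto simp: rel_dist_def mu_num_def cond_num_def one_ereal_def)
    with True x assms(1) show ?thesis by (simp add: mu_num_def cond_num_def)
  next
    case False
    then have "0 < x * y \<and> ereal \<bar>ln (x / y)\<bar> < 1 / (ereal C * mu_num f x)"
      if "rel_dist y x < 1 / (ereal C * mu_num f x)" for y
      using that by (auto simp: rel_dist_def mult.commute split: if_splits)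
    with stable[OF x(1) False x(2)] show ?thesis by blast
  qed
  with assms(1) show ?thesis unfolding amenable_def by (intro exI[of _ C]) auto
qed

theorem mainTheorem7:
  fixes p q :: "real poly"
  assumes "p \<noteq> 0" and "q \<noteq> 0"
    and "\<And>x. poly q x = 0 \<Longrightarrow> poly p x \<noteq> 0"
  shows "amenable (\<lambda>x. poly p x / poly q x) {x. poly q x \<noteq> 0}"
proof -
  define m where "m = rat_order p q"
  have regular: "m (of_real x) = 0 \<longleftrightarrow> poly p x \<noteq> 0 \<and> poly q x \<noteq> 0" for x
    unfolding m_def by (rule rat_order_of_real_eq_0_iff[OF assms])
  have mu: "mu_num (\<lambda>x. poly p x / poly q x) x = ereal (1 + cmod (elasticity m x))"
    if "x \<noteq> 0" "m (of_real x) = 0" for x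
    using that mu_num_rational[OF assms(1,2)] regular unfolding m_def by auto
  obtain C where "1 \<le> C" and stable:
    "\<And>x y. x \<noteq> 0 \<Longrightarrow> m (of_real x) = 0 \<Longrightarrow> 0 < x * y
       \<Longrightarrow> \<bar>ln (x / y)\<bar> < 1 / (C * (1 + cmod (elasticity m x)))
       \<Longrightarrow> m (of_real y) = 0 \<and> 1 + cmod (elasticity m y) \<le> C * (1 + cmod (elasticity m x))"
    using elasticity_rel_stable[OF finite_rat_order_support[OF assms(1,2)]] unfolding m_def by blast
  show ?thesis
  proof (rule amenableI[OF \<open>1 \<le> C\<close>])
    fix x y assume x: "x \<in> {x. poly q x \<noteq> 0}" "x \<noteq> 0" "cond_num (\<lambda>x. poly p x / poly q x) x < \<infinity>"
      and "0 < x * y" and close: "ereal \<bar>ln (x / y)\<bar> < 1 / (ereal C * mu_num (\<lambda>x. poly p x / poly q x) x)"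
    have mx: "m (of_real x) = 0" using x by (auto simp: regular cond_num_def)
    then have "\<bar>ln (x / y)\<bar> < 1 / (C * (1 + cmod (elasticity m x)))"
      using close \<open>1 \<le> C\<close> norm_ge_zero[of "elasticity m x"]
      by (auto simp: mu[OF x(2)] one_ereal_def split: if_splits)
    moreover have "y \<noteq> 0" using \<open>0 < x * y\<close> by auto
    ultimately show "y \<in> {x. poly q x \<noteq> 0} \<and>
        mu_num (\<lambda>x. poly p x / poly q x) y \<le> ereal C * mu_num (\<lambda>x. poly p x / poly q x) x"
      using stable[OF x(2) mx \<open>0 < x * y\<close>] mu[OF x(2) mx] mu[of y] regular[of y] by auto
  qed
qed

end
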